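(* In the setting of the context, let $\tilde f\in\mathcal L^1_{uni}$. Then the map $(s,\eta)\mapsto\mathbb E^{s,\eta}[\int_s^T\tilde f_rdV_r]$ from $[0,T]\times\Omega$ to $\mathbb R$ is $\mathbb F^o$-progressively measurable.
   Context: Let $E$ be Polish, $\Omega=\mathbb D(\mathbb R_+,E)$, $X_t(\omega)=\omega(t)$, $\mathcal F=\sigma(X_r,r\ge0)$, $\mathcal F^o_t=\sigma(X_r,r\le t)$, $\mathcal F_t=\bigcap_{u>t}\mathcal F^o_u$, $\mathbb F^o=(\mathcal F^o_t)$, $\omega^t=\omega(\cdot\wedge t)$. $(\mathbb P^{s,\eta})_{(s,\eta)\in\mathbb R_+\times\Omega}$ is a family of probabilities on $(\Omega,\mathcal F)$ such that $\mathbb P^{s,\eta}(\omega^s=\eta^s)=1$, $\eta\mapsto\mathbb P^{s,\eta}(F)$ is $\mathcal F^o_s$-measurable, $(t,\omega)\mapsto\mathbb P^{t,\omega}(F)$ is $\mathbb F^o$-progressively measurable, and $\mathbb P^{s,\eta}(F|\mathcal F_t)(\omega)=\mathbb P^{s,\eta}(F|\mathcal F^o_t)(\omega)=\mathbb P^{t,\omega}(F)$ for $\mathbb P^{s,\eta}$-a.a. $\omega$, all $t\ge s$, $F\in\mathcal F$. Fix $T>0$ and $V:[0,T]\to\mathbb R_+$ continuous non-decreasing. $\mathcal L^1_{uni}$ is the set of $\mathbb F^o$-progressively measurable processes $Y$ with $\mathbb E^{s,\eta}[\int_s^T|Y_r|dV_r]<\infty$ for all $(s,\eta)\in[0,T]\times\Omega$.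 *)

theory Defs
  imports "HOL-Probability.Probability"
begin

text \<open>Canonical space: cadlag paths on [0,\<infinity>) with values in a Polish space.
  Paths are represented as functions on the reals, frozen at their value at 0 for negative times.\<close>

definition cadlag :: "(real \<Rightarrow> 'e::topological_space) \<Rightarrow> bool" where
  "cadlag \<omega> \<longleftrightarrow> (\<forall>t\<ge>0. continuous (at_right t) \<omega>) \<and> (\<forall>t>0. \<exists>l. (\<omega> \<longlongrightarrow> l) (at_left t))"

definition Skor :: "(real \<Rightarrow> 'e::polish_space) set" where
  "Skor = {\<omega>. cadlag \<omega> \<and> (\<forall>r<0. \<omega> r = \<omega> 0)}"

definition stopped :: "real \<Rightarrow> (real \<Rightarrow> 'e) \<Rightarrow> (real \<Rightarrow> 'e)" where
  "stopped t \<omega> = (\<lambda>r. \<omega> (min r t))"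

definition FF :: "(real \<Rightarrow> 'e::polish_space) measure" where
  "FF = sigma Skor {(\<lambda>\<omega>. \<omega> r) -` A \<inter> Skor | r A. 0 \<le> r \<and> A \<in> sets borel}"

definition Fo :: "real \<Rightarrow> (real \<Rightarrow> 'e::polish_space) measure" where
  "Fo t = sigma Skor {(\<lambda>\<omega>. \<omega> r) -` A \<inter> Skor | r A. 0 \<le> r \<and> r \<le> t \<and> A \<in> sets borel}"

definition Fplus :: "real \<Rightarrow> (real \<Rightarrow> 'e::polish_space) measure" where
  "Fplus t = sigma Skor (\<Inter>u\<in>{t<..}. sets (Fo u))"

definition progressive_on :: "real set \<Rightarrow> (real \<Rightarrow> (real \<Rightarrow> 'e::polish_space) \<Rightarrow> real) \<Rightarrow> bool" where
  "progressive_on S Y \<longleftrightarrow>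
     (\<forall>t\<ge>0. (\<lambda>(r,\<omega>). Y r \<omega>) \<in> borel_measurable (restrict_space borel (S \<inter> {0..t}) \<Otimes>\<^sub>M Fo t))"

definition markov_family ::
    "(real \<Rightarrow> (real \<Rightarrow> 'e::polish_space) \<Rightarrow> (real \<Rightarrow> 'e) measure) \<Rightarrow> bool" where
  "markov_family P \<longleftrightarrow>
     (\<forall>s\<ge>0. \<forall>\<eta>\<in>Skor. prob_space (P s \<eta>) \<and> sets (P s \<eta>) = sets FF \<and>
                        measure (P s \<eta>) {\<omega>\<in>Skor. stopped s \<omega> = stopped s \<eta>} = 1) \<and>
     (\<forall>s\<ge>0. \<forall>F\<in>sets FF. (\<lambda>\<eta>. measure (P s \<eta>) F) \<in> borel_measurable (Fo s)) \<and>
     (\<forall>F\<in>sets FF. progressive_on {0..} (\<lambda>t \<omega>. measure (P t \<omega>) F)) \<and>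
     (\<forall>s\<ge>0. \<forall>\<eta>\<in>Skor. \<forall>t\<ge>s. \<forall>F\<in>sets FF.
        (AE \<omega> in P s \<eta>. real_cond_exp (P s \<eta>) (Fplus t) (indicator F) \<omega> = measure (P t \<omega>) F) \<and>
        (AE \<omega> in P s \<eta>. real_cond_exp (P s \<eta>) (Fo t) (indicator F) \<omega> = measure (P t \<omega>) F))"

definition dV :: "real \<Rightarrow> (real \<Rightarrow> real) \<Rightarrow> real measure" where
  "dV T V = interval_measure (\<lambda>r. V (max 0 (min T r)))"

definition L1_uni ::
    "(real \<Rightarrow> (real \<Rightarrow> 'e::polish_space) \<Rightarrow> (real \<Rightarrow> 'e) measure) \<Rightarrow> real \<Rightarrow> (real \<Rightarrow> real)
     \<Rightarrow> (real \<Rightarrow> (real \<Rightarrow> 'e) \<Rightarrow> real) set" where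
  "L1_uni P T V = {Y. progressive_on {0..T} Y \<and>
     (\<forall>s\<in>{0..T}. \<forall>\<eta>\<in>Skor.
        (\<integral>\<^sup>+\<omega>. (\<integral>\<^sup>+ r. ennreal \<bar>Y r \<omega>\<bar> * indicator {s..T} r \<partial>dV T V) \<partial>P s \<eta>) < \<infinity>)}"

end

theory Submission
  imports Defs
begin

text \<open>The map \<open>(s, \<eta>) \<mapsto> \<P>\<^sup>s\<^sup>,\<^sup>\<eta>\<close> is a measurable kernel on every progressive
  \<sigma>-algebra \<open>\<B>[0,t] \<otimes> \<F>\<^sup>o\<^sub>t\<close>, because each \<open>\<P>\<^sup>s\<^sup>,\<^sup>\<eta>(F)\<close> is progressive; and the
  integrand \<open>(s, \<omega>) \<mapsto> \<integral>\<^sub>s\<^sup>T f\<^sub>r(\<omega>) dV\<^sub>r\<close> is jointly measurable by Fubini, since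
  \<open>f\<close>, extended by zero outside \<open>[0,T]\<close>, is \<open>\<B> \<otimes> \<F>\<close>-measurable. Integrating a jointly
  measurable function against a measurable kernel gives a measurable function.\<close>

lemma integral_measurable_subprob_algebra2:
  fixes f :: "'a \<Rightarrow> 'b \<Rightarrow> 'c::{banach, second_countable_topology}"
  assumes f[measurable]: "(\<lambda>(x, y). f x y) \<in> borel_measurable (M \<Otimes>\<^sub>M N)"
    and L[measurable]: "L \<in> M \<rightarrow>\<^sub>M subprob_algebra N"
  shows "(\<lambda>x. integral\<^sup>L (L x) (f x)) \<in> borel_measurable M"
proof -
  note integral_measurable_subprob_algebra[measurable] measurable_distr2[measurable]
  have "(\<lambda>x. integral\<^sup>L (distr (L x) (M \<Otimes>\<^sub>M N) (\<lambda>y. (x, y))) (\<lambda>(x, y). f x y))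
      \<in> borel_measurable M"
    by measurable
  moreover have "integral\<^sup>L (distr (L x) (M \<Otimes>\<^sub>M N) (\<lambda>y. (x, y))) (\<lambda>(x, y). f x y)
      = integral\<^sup>L (L x) (f x)" if "x \<in> space M" for x
  proof -
    have "(\<lambda>y. (x, y)) \<in> L x \<rightarrow>\<^sub>M M \<Otimes>\<^sub>M N"
      by (rule measurable_Pair[OF measurable_const[OF that] measurable_ident_sets[OF sets_kernel[OF L that]]])
    from integral_distr[OF this f] show ?thesis
      by simp
  qed
  ultimately show ?thesis
    by (rule measurable_cong[THEN iffD1, rotated])
qed

lemma borel_measurable_pair_restrict_space_extend:
  fixes g :: "'a \<times> 'b \<Rightarrow> 'c::real_normed_vector"
  assumes g: "g \<in> borel_measurable (restrict_space M A \<Otimes>\<^sub>M N)" and A: "A \<in> sets M"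
  shows "(\<lambda>x. if fst x \<in> A then g x else 0) \<in> borel_measurable (M \<Otimes>\<^sub>M N)"
proof -
  have ident: "(\<lambda>x. x) \<in> restrict_space (M \<Otimes>\<^sub>M N) (A \<times> space N) \<rightarrow>\<^sub>M restrict_space M A \<Otimes>\<^sub>M N"
  proof (rule measurable_Pair[of fst _ _ snd, simplified])
    show "fst \<in> restrict_space (M \<Otimes>\<^sub>M N) (A \<times> space N) \<rightarrow>\<^sub>M restrict_space M A"
      by (rule measurable_restrict_space2)
         (auto simp: space_restrict_space intro: measurable_restrict_space1)
    show "snd \<in> restrict_space (M \<Otimes>\<^sub>M N) (A \<times> space N) \<rightarrow>\<^sub>M N"
      by (rule measurable_restrict_space1) measurable
  qed
  have "g \<in> borel_measurable (restrict_space (M \<Otimes>\<^sub>M N) (A \<times> space N))"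
    using measurable_comp[OF ident g] by (simp add: comp_def)
  moreover have "A \<times> space N \<inter> space (M \<Otimes>\<^sub>M N) \<in> sets (M \<Otimes>\<^sub>M N)"
    using A by (auto simp: space_pair_measure)
  ultimately have "(\<lambda>x. if x \<in> A \<times> space N then g x else 0) \<in> borel_measurable (M \<Otimes>\<^sub>M N)"
    by (simp add: measurable_restrict_space_iff)
  then show ?thesis
    by (rule measurable_cong[THEN iffD1, rotated]) (auto simp: space_pair_measure)
qed

lemma space_Fo[simp]: "space (Fo t) = Skor"
  unfolding Fo_def by (rule space_measure_of) auto

lemma space_FF[simp]: "space FF = Skor"
  unfolding FF_def by (rule space_measure_of) auto

lemma sets_Fo_subset_FF: "sets (Fo t) \<subseteq> sets FF"
  unfolding Fo_def FF_def
  by (subst sets_measure_of, force)+ (rule sigma_sets_mono', auto)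

lemma measurable_ident_FF_Fo: "(\<lambda>\<omega>. \<omega>) \<in> FF \<rightarrow>\<^sub>M Fo t"
proof (rule measurableI)
  fix A assume A: "A \<in> sets (Fo t)"
  then have "(\<lambda>\<omega>. \<omega>) -` A \<inter> space FF = A"
    using sets.sets_into_space[OF A] by auto
  then show "(\<lambda>\<omega>. \<omega>) -` A \<inter> space FF \<in> sets FF"
    using A sets_Fo_subset_FF by auto
qed auto

lemma progressive_on_cong:
  assumes "\<And>s \<omega>. s \<in> S \<Longrightarrow> \<omega> \<in> Skor \<Longrightarrow> Y s \<omega> = Y' s \<omega>"
  shows "progressive_on S Y \<longleftrightarrow> progressive_on S Y'"
  unfolding progressive_on_def
  by (intro all_cong1 imp_cong refl measurable_cong)
     (auto simp: assms space_pair_measure space_restrict_space)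

lemma progressive_on_subset:
  assumes "progressive_on S Y" "S' \<subseteq> S"
  shows "progressive_on S' Y"
  unfolding progressive_on_def
proof (intro allI impI)
  fix t :: real assume "0 \<le> t"
  with assms(1) have Y: "(\<lambda>(r, \<omega>). Y r \<omega>) \<in> borel_measurable (restrict_space borel (S \<inter> {0..t}) \<Otimes>\<^sub>M Fo t)"
    by (simp add: progressive_on_def)
  have ident: "(\<lambda>x. x) \<in> restrict_space borel (S' \<inter> {0..t}) \<Otimes>\<^sub>M Fo t
      \<rightarrow>\<^sub>M restrict_space borel (S \<inter> {0..t}) \<Otimes>\<^sub>M Fo t"
    by (rule measurable_Pair[of fst _ _ snd, simplified], rule measurable_restrict_space2)
       (use assms(2) in \<open>auto simp: space_pair_measure space_restrict_space
          intro: measurable_compose[OF measurable_fst measurable_restrict_space1]\<close>)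
  show "(\<lambda>(r, \<omega>). Y r \<omega>) \<in> borel_measurable (restrict_space borel (S' \<inter> {0..t}) \<Otimes>\<^sub>M Fo t)"
    using measurable_comp[OF ident Y] by (simp add: comp_def)
qed

lemma progressive_on_extend_by_zero:
  assumes Y: "progressive_on S Y" and S: "S \<subseteq> {0..t}" "S \<in> sets borel" and "0 \<le> t"
  shows "(\<lambda>(r, \<omega>). if r \<in> S then Y r \<omega> else 0) \<in> borel_measurable (borel \<Otimes>\<^sub>M FF)"
proof -
  have "(\<lambda>(r, \<omega>). Y r \<omega>) \<in> borel_measurable (restrict_space borel S \<Otimes>\<^sub>M Fo t)"
    using Y \<open>0 \<le> t\<close> S(1) unfolding progressive_on_def by (metis inf.absorb1)
  from borel_measurable_pair_restrict_space_extend[OF this S(2)]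
  have ext: "(\<lambda>(r, \<omega>). if r \<in> S then Y r \<omega> else 0) \<in> borel_measurable (borel \<Otimes>\<^sub>M Fo t)"
    unfolding case_prod_unfold .
  have "(\<lambda>x. x) \<in> borel \<Otimes>\<^sub>M FF \<rightarrow>\<^sub>M borel \<Otimes>\<^sub>M Fo t"
    by (rule measurable_Pair[of fst _ _ snd, simplified])
       (auto intro: measurable_compose[OF measurable_snd measurable_ident_FF_Fo])
  from measurable_comp[OF this ext] show ?thesis
    by (simp add: comp_def)
qed

lemma markov_family_measurable_kernel:
  fixes P :: "real \<Rightarrow> (real \<Rightarrow> 'e::polish_space) \<Rightarrow> (real \<Rightarrow> 'e) measure"
  assumes P: "markov_family P" and S: "S \<subseteq> {0..}" and "0 \<le> t"
  shows "(\<lambda>x. P (fst x) (snd x))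
    \<in> restrict_space borel (S \<inter> {0..t}) \<Otimes>\<^sub>M (Fo t :: (real \<Rightarrow> 'e) measure) \<rightarrow>\<^sub>M subprob_algebra FF"
proof (rule measurable_subprob_algebra)
  fix x :: "real \<times> (real \<Rightarrow> 'e)"
  assume "x \<in> space (restrict_space borel (S \<inter> {0..t}) \<Otimes>\<^sub>M Fo t)"
  then have "fst x \<ge> 0" "snd x \<in> Skor"
    using S by (auto simp: space_pair_measure space_restrict_space)
  then show "subprob_space (P (fst x) (snd x))" "sets (P (fst x) (snd x)) = sets FF"
    using P unfolding markov_family_def by (auto intro: prob_space_imp_subprob_space)
next
  fix A :: "(real \<Rightarrow> 'e) set" assume A: "A \<in> sets FF"
  have "progressive_on S (\<lambda>s \<omega>. measure (P s \<omega>) A)"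
    using P A S unfolding markov_family_def by (auto intro: progressive_on_subset)
  then have "(\<lambda>x. ennreal (measure (P (fst x) (snd x)) A))
      \<in> borel_measurable (restrict_space borel (S \<inter> {0..t}) \<Otimes>\<^sub>M Fo t)"
    using \<open>0 \<le> t\<close> by (simp add: progressive_on_def case_prod_beta')
  moreover have "ennreal (measure (P (fst x) (snd x)) A) = emeasure (P (fst x) (snd x)) A"
    if "x \<in> space (restrict_space borel (S \<inter> {0..t}) \<Otimes>\<^sub>M Fo t)" for x :: "real \<times> (real \<Rightarrow> 'e)"
  proof -
    have "prob_space (P (fst x) (snd x))"
      using that S P by (auto simp: markov_family_def space_pair_measure space_restrict_space)
    then show ?thesis
      by (simp add: prob_space_def finite_measure.emeasure_eq_measure)
  qed
  ultimately show "(\<lambda>x. emeasure (P (fst x) (snd x)) A)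
      \<in> borel_measurable (restrict_space borel (S \<inter> {0..t}) \<Otimes>\<^sub>M Fo t)"
    by (rule measurable_cong[THEN iffD1, rotated])
qed

lemma sigma_finite_dV:
  assumes "continuous_on {0..T} V" "mono_on {0..T} V" "0 \<le> T"
  shows "sigma_finite_measure (dV T V)"
proof -
  have clamp: "max 0 (min T r) \<in> {0..T}" for r
    using \<open>0 \<le> T\<close> by auto
  have "V (max 0 (min T x)) \<le> V (max 0 (min T y))" if "x \<le> y" for x y
    using that by (intro mono_onD[OF assms(2) clamp clamp]) auto
  moreover have "continuous_on UNIV (\<lambda>r. V (max 0 (min T r)))"
    by (rule continuous_on_compose2[OF assms(1)]) (auto intro!: continuous_intros simp: clamp assms(3))
  ultimately show ?thesis
    unfolding dV_def
    by (intro sigma_finite_interval_measure)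
       (simp_all add: continuous_on_eq_continuous_at continuous_at_imp_continuous_at_within)
qed

lemma borel_measurable_integral_indicator_Icc:
  fixes g :: "real \<times> 'b \<Rightarrow> real"
  assumes "sigma_finite_measure M" and [measurable_cong]: "sets M = sets borel"
    and g[measurable]: "g \<in> borel_measurable (borel \<Otimes>\<^sub>M N)"
  shows "(\<lambda>(s, \<omega>). \<integral>r. g (r, \<omega>) * indicator {s..T} r \<partial>M) \<in> borel_measurable (borel \<Otimes>\<^sub>M N)"
proof -
  have "(\<lambda>(x, r). g (r, snd x) * indicator {fst x..T} r) \<in> borel_measurable ((borel \<Otimes>\<^sub>M N) \<Otimes>\<^sub>M M)"
    unfolding indicator_def atLeastAtMost_iff by measurable
  from sigma_finite_measure.borel_measurable_lebesgue_integral[OF assms(1) this]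
  show ?thesis
    by (simp add: case_prod_unfold)
qed

lemma progressive_on_integral_markov_family:
  fixes P :: "real \<Rightarrow> (real \<Rightarrow> 'e::polish_space) \<Rightarrow> (real \<Rightarrow> 'e) measure"
    and h :: "real \<Rightarrow> (real \<Rightarrow> 'e) \<Rightarrow> real"
  assumes P: "markov_family P" and S: "S \<subseteq> {0..}"
    and h[measurable]: "(\<lambda>(s, \<omega>). h s \<omega>) \<in> borel_measurable (borel \<Otimes>\<^sub>M FF)"
  shows "progressive_on S (\<lambda>s \<eta>. \<integral>\<omega>. h s \<omega> \<partial>P s \<eta>)"
  unfolding progressive_on_def
proof (intro allI impI)
  fix t :: real assume "0 \<le> t"
  have [measurable]: "(\<lambda>x. fst x) \<in> restrict_space borel (S \<inter> {0..t}) \<Otimes>\<^sub>M Fo t \<rightarrow>\<^sub>M borel"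
    by (rule measurable_compose[OF measurable_fst measurable_restrict_space1[OF measurable_ident_sets[OF refl]]])
  have "(\<lambda>(x, \<omega>). h (fst x) \<omega>)
      \<in> borel_measurable ((restrict_space borel (S \<inter> {0..t}) \<Otimes>\<^sub>M Fo t) \<Otimes>\<^sub>M FF)"
    by measurable
  from integral_measurable_subprob_algebra2[OF this markov_family_measurable_kernel[OF P S \<open>0 \<le> t\<close>]]
  show "(\<lambda>(s, \<eta>). \<integral>\<omega>. h s \<omega> \<partial>P s \<eta>) \<in> borel_measurable (restrict_space borel (S \<inter> {0..t}) \<Otimes>\<^sub>M Fo t)"
    by (simp add: case_prod_unfold)
qed

theorem lemmaA1:
  fixes P :: "real \<Rightarrow> (real \<Rightarrow> 'e::polish_space) \<Rightarrow> (real \<Rightarrow> 'e) measure"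
    and T :: real and V :: "real \<Rightarrow> real" and f :: "real \<Rightarrow> (real \<Rightarrow> 'e) \<Rightarrow> real"
  assumes "markov_family P"
    and "T > 0"
    and "continuous_on {0..T} V" and "mono_on {0..T} V" and "\<forall>r\<in>{0..T}. V r \<ge> 0"
    and "f \<in> L1_uni P T V"
  shows "progressive_on {0..T}
           (\<lambda>s \<eta>. \<integral>\<omega>. (\<integral>r. f r \<omega> * indicator {s..T} r \<partial>dV T V) \<partial>P s \<eta>)"
proof -
  \<comment> \<open>Only the progressive measurability of \<open>f\<close> enters: a Bochner integral of a
      non-integrable function is 0.\<close>
  have "0 \<le> T" using \<open>T > 0\<close> by simp
  have f: "progressive_on {0..T} f"
    using \<open>f \<in> L1_uni P T V\<close> by (simp add: L1_uni_def)
  define g where "g = (\<lambda>(r, \<omega>). if r \<in> {0..T} then f r \<omega> else 0)"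
  have g: "g \<in> borel_measurable (borel \<Otimes>\<^sub>M FF)"
    unfolding g_def using progressive_on_extend_by_zero[OF f order_refl _ \<open>0 \<le> T\<close>] by simp
  have "(\<lambda>(s, \<omega>). \<integral>r. g (r, \<omega>) * indicator {s..T} r \<partial>dV T V) \<in> borel_measurable (borel \<Otimes>\<^sub>M FF)"
    by (rule borel_measurable_integral_indicator_Icc[OF sigma_finite_dV[OF assms(3,4) \<open>0 \<le> T\<close>] _ g])
       (simp add: dV_def)
  then have "progressive_on {0..T} (\<lambda>s \<eta>. \<integral>\<omega>. (\<integral>r. g (r, \<omega>) * indicator {s..T} r \<partial>dV T V) \<partial>P s \<eta>)"
    by (intro progressive_on_integral_markov_family[OF assms(1)]) auto
  then show ?thesis
  proof (rule progressive_on_cong[THEN iffD1, rotated])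
    fix s :: real and \<eta> :: "real \<Rightarrow> 'e" assume "s \<in> {0..T}"
    then show "(\<integral>\<omega>. (\<integral>r. g (r, \<omega>) * indicator {s..T} r \<partial>dV T V) \<partial>P s \<eta>)
        = (\<integral>\<omega>. (\<integral>r. f r \<omega> * indicator {s..T} r \<partial>dV T V) \<partial>P s \<eta>)"
      by (intro Bochner_Integration.integral_cong refl) (auto simp: g_def indicator_def)
  qed
qed

end
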